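(* Consider the system $x_{t+1} = A_t x_t + B_t u_t + w_t$ over horizon $T$ with stacked vectors $\mathbf{x} = (x_0,\dots,x_{T-1})$, $\mathbf{u} = (u_0,\dots,u_{T-1})$, $\mathbf{w} = (x_0,w_0,\dots,w_{T-2})$, so that $\mathbf{x} = \mathbf{F}\mathbf{u} + \mathbf{G}\mathbf{w}$ with $\mathbf{F} = (\mathbf{I}-\mathbf{Z}\mathbf{A})^{-1}\mathbf{Z}\mathbf{B}$, $\mathbf{G} = (\mathbf{I}-\mathbf{Z}\mathbf{A})^{-1}$. Let $\mathbf{Q}\succeq 0$, $\mathbf{R}\succ 0$, $J(\bm{\pi},\mathbf{w}) = \mathbf{x}^\top\mathbf{Q}\mathbf{x} + \mathbf{u}^\top\mathbf{R}\mathbf{u}$, and let $\bm{\psi}^\star$ be the unconstrained clairvoyant optimal policy, $\mathbf{u}_{\psi^\star} = -(\mathbf{R}+\mathbf{F}^\top\mathbf{Q}\mathbf{F})^{-1}\mathbf{F}^\top\mathbf{Q}\mathbf{G}\mathbf{w}$, $\mathbf{x}_{\psi^\star} = \mathbf{F}\mathbf{u}_{\psi^\star}+\mathbf{G}\mathbf{w}$. Assume $\mathbf{w}$ is random with distribution $\mathcal{D}$ having mean $\bm{\mu}_\mathbf{w}$ and covariance $\Sigma_\mathbf{w}\succeq 0$. Then, over linear control policies $\bm{\pi}$ (causal linear state feedback $\mathbf{u}=\mathbf{K}\mathbf{x}$ with $\mathbf{K}$ block lower-triangular), the set of minimizers of $$\mathbb{E}\big[(\mathbf{x}-\mathbf{x}_{\psi^\star})^\top\mathbf{Q}(\mathbf{x}-\mathbf{x}_{\psi^\star})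 + (\mathbf{u}-\mathbf{u}_{\psi^\star})^\top\mathbf{R}(\mathbf{u}-\mathbf{u}_{\psi^\star})\big]$$ coincides with $\operatorname{argmin}_{\bm{\pi}} \mathbb{E}[J(\bm{\pi},\mathbf{w})]$.
   Context: $\mathbf{Z}$ is the block-downshift matrix (identity blocks on the first block sub-diagonal, zeros elsewhere), $\mathbf{A} = \operatorname{blkdiag}(A_0,\dots,A_{T-2},0_{n\times n})$, $\mathbf{B} = \operatorname{blkdiag}(B_0,\dots,B_{T-2},0_{n\times m})$. $\mathbf{x},\mathbf{u}$ denote the closed-loop trajectories under $\bm{\pi}$ driven by $\mathbf{w}$; expectations are with respect to $\mathbf{w}\sim\mathcal{D}$. *)

theory Defs
  imports "HOL-Probability.Probability_Measure" "Jordan_Normal_Form.Gauss_Jordan_Elimination"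
begin

(* Horizon T, state dimension n, input dimension m.
   Stacked vectors: x, w in R^(n*T), u in R^(m*T); block t of a stacked state vector
   consists of the indices t*n .. t*n+n-1. *)

definition inv_mat :: "real mat \<Rightarrow> real mat" where
  "inv_mat M = the (mat_inverse M)"

definition psd_mat :: "nat \<Rightarrow> real mat \<Rightarrow> bool" where
  "psd_mat N M \<longleftrightarrow> M \<in> carrier_mat N N \<and> transpose_mat M = M \<and>
     (\<forall>v \<in> carrier_vec N. 0 \<le> scalar_prod v (mult_mat_vec M v))"

definition pd_mat :: "nat \<Rightarrow> real mat \<Rightarrow> bool" where
  "pd_mat N M \<longleftrightarrow> M \<in> carrier_mat N N \<and> transpose_mat M = M \<and>
     (\<forall>v \<in> carrier_vec N. v \<noteq> 0\<^sub>v N \<longrightarrow> 0 < scalar_prod v (mult_mat_vec M v))"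

definition Zmat :: "nat \<Rightarrow> nat \<Rightarrow> real mat" where
  "Zmat n T = mat (n*T) (n*T) (\<lambda>(i,j). if i div n = j div n + 1 \<and> i mod n = j mod n then 1 else 0)"

definition blkA :: "nat \<Rightarrow> nat \<Rightarrow> (nat \<Rightarrow> real mat) \<Rightarrow> real mat" where
  "blkA n T A = mat (n*T) (n*T) (\<lambda>(i,j). if i div n = j div n \<and> i div n + 1 < T
       then A (i div n) $$ (i mod n, j mod n) else 0)"

definition blkB :: "nat \<Rightarrow> nat \<Rightarrow> nat \<Rightarrow> (nat \<Rightarrow> real mat) \<Rightarrow> real mat" where
  "blkB n m T B = mat (n*T) (m*T) (\<lambda>(i,j). if i div n = j div m \<and> i div n + 1 < T
       then B (i div n) $$ (i mod n, j mod m) else 0)"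

definition Gmat :: "nat \<Rightarrow> nat \<Rightarrow> (nat \<Rightarrow> real mat) \<Rightarrow> real mat" where
  "Gmat n T A = inv_mat (1\<^sub>m (n*T) - Zmat n T * blkA n T A)"

definition Fmat :: "nat \<Rightarrow> nat \<Rightarrow> nat \<Rightarrow> (nat \<Rightarrow> real mat) \<Rightarrow> (nat \<Rightarrow> real mat) \<Rightarrow> real mat" where
  "Fmat n m T A B = Gmat n T A * (Zmat n T * blkB n m T B)"

definition causal_gains :: "nat \<Rightarrow> nat \<Rightarrow> nat \<Rightarrow> real mat set" where
  "causal_gains n m T = {K. K \<in> carrier_mat (m*T) (n*T) \<and>
      (\<forall>i < m*T. \<forall>j < n*T. i div m < j div n \<longrightarrow> K $$ (i,j) = 0)}"

text \<open>Closed-loop trajectories under u = K x, x = F u + G w.\<close>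
definition cl_x :: "nat \<Rightarrow> nat \<Rightarrow> nat \<Rightarrow> (nat \<Rightarrow> real mat) \<Rightarrow> (nat \<Rightarrow> real mat) \<Rightarrow> real mat \<Rightarrow> real vec \<Rightarrow> real vec" where
  "cl_x n m T A B K w = mult_mat_vec (inv_mat (1\<^sub>m (n*T) - Fmat n m T A B * K)) (mult_mat_vec (Gmat n T A) w)"

definition cl_u :: "nat \<Rightarrow> nat \<Rightarrow> nat \<Rightarrow> (nat \<Rightarrow> real mat) \<Rightarrow> (nat \<Rightarrow> real mat) \<Rightarrow> real mat \<Rightarrow> real vec \<Rightarrow> real vec" where
  "cl_u n m T A B K w = mult_mat_vec K (cl_x n m T A B K w)"

definition opt_u :: "nat \<Rightarrow> nat \<Rightarrow> nat \<Rightarrow> (nat \<Rightarrow> real mat) \<Rightarrow> (nat \<Rightarrow> real mat) \<Rightarrow> real mat \<Rightarrow> real mat \<Rightarrow> real vec \<Rightarrow> real vec" where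
  "opt_u n m T A B Q R w =
     (let F = Fmat n m T A B; G = Gmat n T A in
      - mult_mat_vec (inv_mat (R + transpose_mat F * Q * F) * transpose_mat F * Q * G) w)"

definition opt_x :: "nat \<Rightarrow> nat \<Rightarrow> nat \<Rightarrow> (nat \<Rightarrow> real mat) \<Rightarrow> (nat \<Rightarrow> real mat) \<Rightarrow> real mat \<Rightarrow> real mat \<Rightarrow> real vec \<Rightarrow> real vec" where
  "opt_x n m T A B Q R w = mult_mat_vec (Fmat n m T A B) (opt_u n m T A B Q R w) + mult_mat_vec (Gmat n T A) w"

definition quad :: "real mat \<Rightarrow> real vec \<Rightarrow> real" where
  "quad M v = scalar_prod v (mult_mat_vec M v)"

definition exp_cost :: "'a measure \<Rightarrow> ('a \<Rightarrow> real vec) \<Rightarrow> nat \<Rightarrow> nat \<Rightarrow> nat \<Rightarrow> (nat \<Rightarrow> real mat) \<Rightarrow> (nat \<Rightarrow> real mat) \<Rightarrow> real mat \<Rightarrow> real mat \<Rightarrow> real mat \<Rightarrow> real" where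
  "exp_cost M w n m T A B Q R K =
     integral\<^sup>L M (\<lambda>\<omega>. quad Q (cl_x n m T A B K (w \<omega>)) + quad R (cl_u n m T A B K (w \<omega>)))"

definition exp_dev :: "'a measure \<Rightarrow> ('a \<Rightarrow> real vec) \<Rightarrow> nat \<Rightarrow> nat \<Rightarrow> nat \<Rightarrow> (nat \<Rightarrow> real mat) \<Rightarrow> (nat \<Rightarrow> real mat) \<Rightarrow> real mat \<Rightarrow> real mat \<Rightarrow> real mat \<Rightarrow> real" where
  "exp_dev M w n m T A B Q R K =
     integral\<^sup>L M (\<lambda>\<omega>. quad Q (cl_x n m T A B K (w \<omega>) - opt_x n m T A B Q R (w \<omega>))
                     + quad R (cl_u n m T A B K (w \<omega>) - opt_u n m T A B Q R (w \<omega>)))"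

definition argmin_on :: "'b set \<Rightarrow> ('b \<Rightarrow> real) \<Rightarrow> 'b set" where
  "argmin_on S f = {k \<in> S. \<forall>k' \<in> S. f k \<le> f k'}"

end

(*
  Every closed loop satisfies x = F u + G w, and the clairvoyant input uc solves the normal
  equations (R + F'QF) uc = -F'QG w, i.e. F'Q xc + R uc = 0 for xc = F uc + G w.  Expanding
  x'Qx + u'Ru around (xc, uc), the cross term 2 (u - uc)'(F'Q xc + R uc) vanishes, so pointwise
  in w the cost J equals the deviation cost plus J(uc, w).  Taking expectations, the two
  objectives differ by E[J(uc, w)], which does not depend on the gain K, so they have the same
  minimisers.

  Causality makes Z A and F K strictly block lower triangular, so I - Z A and I - F K are
  unipotent and the closed loop is well defined for every causal K; square integrability of w
  makes all the expectations finite.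
*)

theory Submission
  imports Defs "Jordan_Normal_Form.Determinant"
begin

unbundle no vec_syntax and no inner_syntax

section \<open>Square-integrable random vectors\<close>

definition square_integrable :: "'a measure \<Rightarrow> ('a \<Rightarrow> real) \<Rightarrow> bool" where
  "square_integrable M f \<longleftrightarrow> f \<in> borel_measurable M \<and> integrable M (\<lambda>x. (f x)\<^sup>2)"

lemma square_integrable_mult:
  assumes "square_integrable M f" and "square_integrable M g"
  shows "integrable M (\<lambda>x. f x * g x)"
proof (rule Bochner_Integration.integrable_bound)
  show "integrable M (\<lambda>x. (f x)\<^sup>2 + (g x)\<^sup>2)" and "(\<lambda>x. f x * g x) \<in> borel_measurable M"
    using assms unfolding square_integrable_def by auto
  have "\<bar>a * b\<bar> \<le> a\<^sup>2 + b\<^sup>2" for a b :: real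
  proof -
    have "\<bar>a * b\<bar> \<le> 2 * (\<bar>a\<bar> * \<bar>b\<bar>)"
      by (simp add: abs_mult)
    also have "\<dots> \<le> a\<^sup>2 + b\<^sup>2"
      using sum_squares_bound[of "\<bar>a\<bar>" "\<bar>b\<bar>"] by (simp add: mult.assoc)
    finally show ?thesis .
  qed
  then show "AE x in M. norm (f x * g x) \<le> norm ((f x)\<^sup>2 + (g x)\<^sup>2)"
    by simp
qed

lemma square_integrable_add:
  assumes "square_integrable M f" and "square_integrable M g"
  shows "square_integrable M (\<lambda>x. f x + g x)"
proof -
  have "integrable M (\<lambda>x. (f x)\<^sup>2 + (g x)\<^sup>2 + 2 * f x * g x)"
    using assms square_integrable_mult[OF assms] unfolding square_integrable_def
    by (auto simp: mult.assoc)
  then show ?thesis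
    using assms unfolding square_integrable_def by (simp add: power2_sum borel_measurable_add)
qed

lemma square_integrable_cmult:
  assumes "square_integrable M f"
  shows "square_integrable M (\<lambda>x. c * f x)"
  using assms unfolding square_integrable_def by (simp add: power_mult_distrib borel_measurable_times)

lemma square_integrable_sum:
  assumes "finite I" and "\<And>i. i \<in> I \<Longrightarrow> square_integrable M (f i)"
  shows "square_integrable M (\<lambda>x. \<Sum>i\<in>I. f i x)"
  using assms
proof (induction I rule: finite_induct)
  case empty
  then show ?case by (simp add: square_integrable_def)
next
  case (insert i I)
  then show ?case by (simp add: square_integrable_add)
qed

lemma square_integrable_cong:
  assumes "square_integrable M f" and "\<And>x. x \<in> space M \<Longrightarrow> f x = g x"
  shows "square_integrable M g"
  using assms measurable_cong[of M f g] Bochner_Integration.integrable_cong[of M M "\<lambda>x. (f x)\<^sup>2" "\<lambda>x. (g x)\<^sup>2"]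
  unfolding square_integrable_def by simp

definition square_integrable_vec :: "'a measure \<Rightarrow> nat \<Rightarrow> ('a \<Rightarrow> real vec) \<Rightarrow> bool" where
  "square_integrable_vec M d y \<longleftrightarrow>
     (\<forall>x \<in> space M. y x \<in> carrier_vec d) \<and> (\<forall>i < d. square_integrable M (\<lambda>x. y x $ i))"

lemma index_mult_mat_vec_sum:
  assumes "L \<in> carrier_mat r d" and "v \<in> carrier_vec d" and "i < r"
  shows "(L *\<^sub>v v) $ i = (\<Sum>j<d. L $$ (i, j) * v $ j)"
  using assms by (auto simp: scalar_prod_def atLeast0LessThan intro: sum.cong)

lemma square_integrable_vec_mult_mat_vec:
  assumes L: "L \<in> carrier_mat r d" and y: "square_integrable_vec M d y"
  shows "square_integrable_vec M r (\<lambda>x. L *\<^sub>v y x)"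
proof -
  have "square_integrable M (\<lambda>x. (L *\<^sub>v y x) $ i)" if i: "i < r" for i
  proof (rule square_integrable_cong)
    show "square_integrable M (\<lambda>x. \<Sum>j<d. L $$ (i, j) * y x $ j)"
      using y unfolding square_integrable_vec_def
      by (intro square_integrable_sum square_integrable_cmult) simp_all
    show "(\<Sum>j<d. L $$ (i, j) * y x $ j) = (L *\<^sub>v y x) $ i" if "x \<in> space M" for x
      using y that unfolding square_integrable_vec_def
      by (simp add: index_mult_mat_vec_sum[OF L _ i])
  qed
  then show ?thesis
    using L y unfolding square_integrable_vec_def by simp
qed

lemma square_integrable_vec_add:
  assumes "square_integrable_vec M d y" and "square_integrable_vec M d z"
  shows "square_integrable_vec M d (\<lambda>x. y x + z x)"
  unfolding square_integrable_vec_def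
proof (intro conjI ballI allI impI)
  show "y x + z x \<in> carrier_vec d" if "x \<in> space M" for x
    using assms that unfolding square_integrable_vec_def by simp
  fix i assume i: "i < d"
  have "square_integrable M (\<lambda>x. y x $ i + z x $ i)"
    using assms i unfolding square_integrable_vec_def by (simp add: square_integrable_add)
  then show "square_integrable M (\<lambda>x. (y x + z x) $ i)"
    by (rule square_integrable_cong) (use assms i in \<open>auto simp: square_integrable_vec_def\<close>)
qed

lemma square_integrable_vec_uminus:
  assumes "square_integrable_vec M d y"
  shows "square_integrable_vec M d (\<lambda>x. - y x)"
  unfolding square_integrable_vec_def
proof (intro conjI ballI allI impI)
  show "- y x \<in> carrier_vec d" if "x \<in> space M" for x
    using assms that unfolding square_integrable_vec_def by simp
  fix i assume i: "i < d"
  have "square_integrable M (\<lambda>x. - y x $ i)"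
    using assms i square_integrable_cmult[of M "\<lambda>x. y x $ i" "- 1"]
    unfolding square_integrable_vec_def by simp
  then show "square_integrable M (\<lambda>x. (- y x) $ i)"
    by (rule square_integrable_cong) (use assms i in \<open>auto simp: square_integrable_vec_def\<close>)
qed

lemma integrable_quad:
  assumes P: "P \<in> carrier_mat d d" and y: "square_integrable_vec M d y"
  shows "integrable M (\<lambda>x. quad P (y x))"
proof -
  have Py: "square_integrable_vec M d (\<lambda>x. P *\<^sub>v y x)"
    using P y by (rule square_integrable_vec_mult_mat_vec)
  have "integrable M (\<lambda>x. \<Sum>i<d. y x $ i * (P *\<^sub>v y x) $ i)"
  proof (rule Bochner_Integration.integrable_sum)
    fix i assume "i \<in> {..<d}"
    then show "integrable M (\<lambda>x. y x $ i * (P *\<^sub>v y x) $ i)"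
      using y Py unfolding square_integrable_vec_def by (simp add: square_integrable_mult)
  qed
  moreover have "(\<Sum>i<d. y x $ i * (P *\<^sub>v y x) $ i) = quad P (y x)" if "x \<in> space M" for x
    using P y that unfolding square_integrable_vec_def
    by (simp add: quad_def scalar_prod_def atLeast0LessThan)
  ultimately show ?thesis
    by (rule Bochner_Integration.integrable_cong[OF refl, THEN iffD1, rotated])
qed

section \<open>Block-triangular matrices\<close>

definition strictly_block_lower :: "nat \<Rightarrow> nat \<Rightarrow> 'b :: zero mat \<Rightarrow> bool" where
  "strictly_block_lower p q N \<longleftrightarrow>
     (\<forall>i < dim_row N. \<forall>j < dim_col N. i div p \<le> j div q \<longrightarrow> N $$ (i, j) = 0)"

definition block_lower :: "nat \<Rightarrow> nat \<Rightarrow> 'b :: zero mat \<Rightarrow> bool" where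
  "block_lower p q N \<longleftrightarrow>
     (\<forall>i < dim_row N. \<forall>j < dim_col N. i div p < j div q \<longrightarrow> N $$ (i, j) = 0)"

lemma strictly_block_lower_mult_block_lower:
  fixes N K :: "'b :: semiring_0 mat"
  assumes "dim_col N = dim_row K" and "strictly_block_lower p q N" and "block_lower q t K"
  shows "strictly_block_lower p t (N * K)"
  unfolding strictly_block_lower_def
proof (intro allI impI)
  fix i j assume i: "i < dim_row (N * K)" and j: "j < dim_col (N * K)" and ij: "i div p \<le> j div t"
  have "N $$ (i, k) * K $$ (k, j) = 0" if k: "k < dim_col N" for k
  proof (cases "i div p \<le> k div q")
    case True
    then show ?thesis using assms(2) i k unfolding strictly_block_lower_def by simp
  next
    case False
    then show ?thesis using assms(1,3) j k ij unfolding block_lower_def by simp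
  qed
  then show "(N * K) $$ (i, j) = 0"
    using assms(1) i j by (simp add: scalar_prod_def)
qed

lemma block_lower_mult_strictly_block_lower:
  fixes G N :: "'b :: semiring_0 mat"
  assumes "dim_col G = dim_row N" and "block_lower p q G" and "strictly_block_lower q t N"
  shows "strictly_block_lower p t (G * N)"
  unfolding strictly_block_lower_def
proof (intro allI impI)
  fix i j assume i: "i < dim_row (G * N)" and j: "j < dim_col (G * N)" and ij: "i div p \<le> j div t"
  have "G $$ (i, k) * N $$ (k, j) = 0" if k: "k < dim_col G" for k
  proof (cases "i div p < k div q")
    case True
    then show ?thesis using assms(2) i k unfolding block_lower_def by simp
  next
    case False
    then show ?thesis using assms(1,3) j k ij unfolding strictly_block_lower_def by simp
  qed
  then show "(G * N) $$ (i, j) = 0"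
    using assms(1) i j by (simp add: scalar_prod_def)
qed

lemma det_one_minus_strictly_block_lower:
  fixes N :: "'b :: comm_ring_1 mat"
  assumes N: "N \<in> carrier_mat d d" and "strictly_block_lower p p N"
  shows "Determinant.det (1\<^sub>m d - N) = 1"
proof -
  have "Determinant.det (1\<^sub>m d - N) = prod_list (diag_mat (1\<^sub>m d - N))"
  proof (rule det_lower_triangular)
    fix i j assume "i < j" and "j < d"
    moreover have "i div p \<le> j div p"
      using \<open>i < j\<close> by (simp add: div_le_mono)
    ultimately show "(1\<^sub>m d - N) $$ (i, j) = 0"
      using assms unfolding strictly_block_lower_def by auto
  qed (rule minus_carrier_mat[OF N])
  also have "\<dots> = 1"
    using assms unfolding strictly_block_lower_def by (auto simp: prod_list_diag_prod intro: prod.neutral)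
  finally show ?thesis .
qed

lemma inv_mat_correct:
  assumes M: "M \<in> carrier_mat d d" and "Determinant.det M \<noteq> 0"
  shows "inv_mat M \<in> carrier_mat d d" and "M * inv_mat M = 1\<^sub>m d"
proof -
  have "M \<in> Units (ring_mat TYPE(real) d ())"
    using assms by (rule det_non_zero_imp_unit)
  then obtain B where B: "mat_inverse M = Some B"
    using mat_inverse(1)[OF M, where b = "()"] by fastforce
  then show "inv_mat M \<in> carrier_mat d d" and "M * inv_mat M = 1\<^sub>m d"
    using mat_inverse(2)[OF M B] unfolding inv_mat_def by simp_all
qed

lemma block_lower_inverse_one_minus:
  fixes N X :: "'b :: comm_ring_1 mat"
  assumes N: "N \<in> carrier_mat d d" "strictly_block_lower p p N"
    and X: "X \<in> carrier_mat d d" "(1\<^sub>m d - N) * X = 1\<^sub>m d"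
  shows "block_lower p p X"
proof -
  have "X - N * X = 1\<^sub>m d"
    using X by (simp add: minus_mult_distrib_mat[OF one_carrier_mat N(1) X(1)])
  then have entry: "X $$ (i, j) = 1\<^sub>m d $$ (i, j) + (N * X) $$ (i, j)" if "i < d" "j < d" for i j
    using that N X by (metis carrier_matD index_minus_mat(1) index_mult_mat(2,3) diff_add_cancel)
  have "X $$ (i, j) = 0" if "i < d" "j < d" "i div p < j div p" for i j
    using that
  proof (induction "i div p" arbitrary: i rule: less_induct)
    case (less i)
    have "N $$ (i, k) * X $$ (k, j) = 0" if k: "k < d" for k
    proof (cases "i div p \<le> k div p")
      case True
      then show ?thesis using N less.prems k unfolding strictly_block_lower_def by simp
    next
      case False
      then show ?thesis using less.hyps[of k] less.prems k by simp
    qed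
    then have "(N * X) $$ (i, j) = 0"
      using N X less.prems by (simp add: scalar_prod_def)
    then show ?case
      using entry[of i j] less.prems by auto
  qed
  then show ?thesis
    using X unfolding block_lower_def by simp
qed

section \<open>Quadratic forms and the normal equations\<close>

lemma scalar_prod_transpose_mult_mat_vec:
  fixes F :: "'b :: comm_semiring_0 mat"
  assumes "F \<in> carrier_mat d e" and "u \<in> carrier_vec e" and "z \<in> carrier_vec d"
  shows "u \<bullet> (transpose_mat F *\<^sub>v z) = (F *\<^sub>v u) \<bullet> z"
  using transpose_vec_mult_scalar[OF assms] assms
    comm_scalar_prod[of u e "transpose_mat F *\<^sub>v z"] comm_scalar_prod[of z d "F *\<^sub>v u"]
  by simp

lemma mult_mat_vec_uminus:
  fixes A :: "'b :: ring mat"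
  assumes "A \<in> carrier_mat r d" and "v \<in> carrier_vec d"
  shows "A *\<^sub>v (- v) = - (A *\<^sub>v v)"
  using assms by (intro eq_vecI) auto

lemma mult_congruence_mat_vec:
  assumes F: "F \<in> carrier_mat d e" and Q: "Q \<in> carrier_mat d d" and v: "v \<in> carrier_vec e"
  shows "(transpose_mat F * Q * F) *\<^sub>v v = transpose_mat F *\<^sub>v (Q *\<^sub>v (F *\<^sub>v v))"
proof -
  have Ft: "transpose_mat F \<in> carrier_mat e d"
    using F by simp
  show ?thesis
    using assoc_mult_mat_vec[OF mult_carrier_mat[OF Ft Q] F v]
      assoc_mult_mat_vec[OF Ft Q mult_mat_vec_carrier[OF F v]]
    by (simp only:)
qed

lemma quad_add:
  assumes Q: "Q \<in> carrier_mat d d" "transpose_mat Q = Q"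
    and a: "a \<in> carrier_vec d" and b: "b \<in> carrier_vec d"
  shows "quad Q (a + b) = quad Q a + quad Q b + 2 * (a \<bullet> (Q *\<^sub>v b))"
proof -
  have "b \<bullet> (Q *\<^sub>v a) = a \<bullet> (Q *\<^sub>v b)"
    using scalar_prod_transpose_mult_mat_vec[OF Q(1) b a] comm_scalar_prod[of a d "Q *\<^sub>v b"] Q a b
    by simp
  then show ?thesis
    using Q a b
    by (simp add: quad_def mult_add_distrib_mat_vec[OF Q(1) a b] add_scalar_prod_distrib[of a d b]
        scalar_prod_add_distrib[of _ d])
qed

lemma pd_mat_plus_congruence_det_nonzero:
  assumes R: "pd_mat e R" and Q: "psd_mat d Q" and F: "F \<in> carrier_mat d e"
  shows "Determinant.det (R + transpose_mat F * Q * F) \<noteq> 0"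
proof
  let ?H = "R + transpose_mat F * Q * F"
  have Rc: "R \<in> carrier_mat e e" and Qc: "Q \<in> carrier_mat d d"
    using R Q unfolding pd_mat_def psd_mat_def by simp_all
  have Hc: "?H \<in> carrier_mat e e"
    using Rc Qc F by simp
  assume "Determinant.det ?H = 0"
  then obtain v where v: "v \<in> carrier_vec e" "v \<noteq> 0\<^sub>v e" and Hv: "?H *\<^sub>v v = 0\<^sub>v e"
    using det_0_iff_vec_prod_zero[OF Hc] by blast
  have Ft: "transpose_mat F \<in> carrier_mat e d"
    using F by simp
  have "?H *\<^sub>v v = R *\<^sub>v v + (transpose_mat F * Q * F) *\<^sub>v v"
    using Rc Qc F Ft v by (intro add_mult_distrib_mat_vec) auto
  also have "(transpose_mat F * Q * F) *\<^sub>v v = transpose_mat F *\<^sub>v (Q *\<^sub>v (F *\<^sub>v v))"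
    by (rule mult_congruence_mat_vec[OF F Qc v(1)])
  finally have "R *\<^sub>v v + transpose_mat F *\<^sub>v (Q *\<^sub>v (F *\<^sub>v v)) = 0\<^sub>v e"
    using Hv by simp
  then have "0 = v \<bullet> (R *\<^sub>v v + transpose_mat F *\<^sub>v (Q *\<^sub>v (F *\<^sub>v v)))"
    using v by simp
  then have "0 = v \<bullet> (R *\<^sub>v v) + (F *\<^sub>v v) \<bullet> (Q *\<^sub>v (F *\<^sub>v v))"
    using Rc Qc F Ft v
    by (simp add: scalar_prod_add_distrib[of v e] scalar_prod_transpose_mult_mat_vec[OF F])
  moreover have "0 < v \<bullet> (R *\<^sub>v v)"
    using R v unfolding pd_mat_def by blast
  moreover have "0 \<le> (F *\<^sub>v v) \<bullet> (Q *\<^sub>v (F *\<^sub>v v))"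
    using Q F v unfolding psd_mat_def by simp
  ultimately show False
    by linarith
qed

lemma quad_split_at_stationary_point:
  fixes Q R F :: "real mat"
  assumes Q: "Q \<in> carrier_mat d d" "transpose_mat Q = Q"
    and R: "R \<in> carrier_mat e e" "transpose_mat R = R"
    and F: "F \<in> carrier_mat d e" and g: "g \<in> carrier_vec d"
    and u: "u \<in> carrier_vec e" and us: "us \<in> carrier_vec e"
    and stationary: "transpose_mat F *\<^sub>v (Q *\<^sub>v (F *\<^sub>v us + g)) + R *\<^sub>v us = 0\<^sub>v e"
  shows "quad Q (F *\<^sub>v u + g) + quad R u =
    quad Q (F *\<^sub>v u + g - (F *\<^sub>v us + g)) + quad R (u - us) + (quad Q (F *\<^sub>v us + g) + quad R us)"
proof -
  define xs where "xs = F *\<^sub>v us + g"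
  define du where "du = u - us"
  have xs: "xs \<in> carrier_vec d" and du: "du \<in> carrier_vec e"
    using F g u us unfolding xs_def du_def by auto
  have Fdu: "F *\<^sub>v du = F *\<^sub>v u - F *\<^sub>v us"
    unfolding du_def by (rule mult_minus_distrib_mat_vec[OF F u us])
  have x_split: "F *\<^sub>v u + g = F *\<^sub>v du + xs" and dx: "F *\<^sub>v u + g - xs = F *\<^sub>v du"
    using F g u us unfolding Fdu xs_def by (auto simp del: index_mult_mat_vec)
  have u_split: "u = du + us"
    using u us unfolding du_def by auto
  have "(F *\<^sub>v du) \<bullet> (Q *\<^sub>v xs) + du \<bullet> (R *\<^sub>v us)
      = du \<bullet> (transpose_mat F *\<^sub>v (Q *\<^sub>v xs) + R *\<^sub>v us)"
    using F Q R xs du us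
    by (simp add: scalar_prod_transpose_mult_mat_vec scalar_prod_add_distrib[of du e])
  also have "\<dots> = 0"
    using stationary du unfolding xs_def by simp
  finally have cross: "(F *\<^sub>v du) \<bullet> (Q *\<^sub>v xs) + du \<bullet> (R *\<^sub>v us) = 0" .
  have "quad Q (F *\<^sub>v u + g) = quad Q (F *\<^sub>v du) + quad Q xs + 2 * ((F *\<^sub>v du) \<bullet> (Q *\<^sub>v xs))"
    unfolding x_split using Q F du xs by (intro quad_add) auto
  moreover have "quad R u = quad R du + quad R us + 2 * (du \<bullet> (R *\<^sub>v us))"
    unfolding u_split using R du us by (rule quad_add)
  ultimately show ?thesis
    using cross unfolding dx du_def[symmetric] xs_def[symmetric] by (simp add: algebra_simps)
qed

lemma normal_equation_solution_stationary:
  fixes Q R F Hi :: "real mat"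
  assumes Q: "Q \<in> carrier_mat d d" and R: "R \<in> carrier_mat e e" and F: "F \<in> carrier_mat d e"
    and Hi: "Hi \<in> carrier_mat e e" and inverse: "(R + transpose_mat F * Q * F) * Hi = 1\<^sub>m e"
    and g: "g \<in> carrier_vec d"
    and us: "us = - (Hi *\<^sub>v (transpose_mat F *\<^sub>v (Q *\<^sub>v g)))"
  shows "transpose_mat F *\<^sub>v (Q *\<^sub>v (F *\<^sub>v us + g)) + R *\<^sub>v us = 0\<^sub>v e"
proof -
  define c where "c = transpose_mat F *\<^sub>v (Q *\<^sub>v g)"
  have Ft: "transpose_mat F \<in> carrier_mat e d"
    using F by simp
  have c: "c \<in> carrier_vec e" and usc: "us \<in> carrier_vec e"
    using Ft Q Hi g unfolding c_def us by auto
  have FtQF: "transpose_mat F * Q * F \<in> carrier_mat e e"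
    using Q F Ft by auto
  have H: "R + transpose_mat F * Q * F \<in> carrier_mat e e"
    using R FtQF by auto
  have "R *\<^sub>v us + transpose_mat F *\<^sub>v (Q *\<^sub>v (F *\<^sub>v us)) = (R + transpose_mat F * Q * F) *\<^sub>v us"
    by (simp only: add_mult_distrib_mat_vec[OF R FtQF usc] mult_congruence_mat_vec[OF F Q usc])
  also have "\<dots> = - (((R + transpose_mat F * Q * F) * Hi) *\<^sub>v c)"
    using H Hi c unfolding us c_def[symmetric] by (simp add: mult_mat_vec_uminus[OF H])
  also have "\<dots> = - c"
    using c unfolding inverse by simp
  finally have Hus: "R *\<^sub>v us + transpose_mat F *\<^sub>v (Q *\<^sub>v (F *\<^sub>v us)) = - c" .
  have "transpose_mat F *\<^sub>v (Q *\<^sub>v (F *\<^sub>v us + g)) = transpose_mat F *\<^sub>v (Q *\<^sub>v (F *\<^sub>v us)) + c"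
    using Q F Ft g usc unfolding c_def by (simp add: mult_add_distrib_mat_vec[of _ d d] mult_add_distrib_mat_vec[of _ e d])
  also have "\<dots> + R *\<^sub>v us = (R *\<^sub>v us + transpose_mat F *\<^sub>v (Q *\<^sub>v (F *\<^sub>v us))) + c"
    using R Q F Ft usc c by (auto simp del: index_mult_mat_vec)
  finally show ?thesis
    unfolding Hus using c by simp
qed

section \<open>The stacked system\<close>

lemma Zmat_carrier: "Zmat n T \<in> carrier_mat (n * T) (n * T)"
  and Zmat_strictly_block_lower: "strictly_block_lower n n (Zmat n T)"
  unfolding Zmat_def strictly_block_lower_def by auto

lemma blkA_carrier: "blkA n T A \<in> carrier_mat (n * T) (n * T)"
  and blkA_block_lower: "block_lower n n (blkA n T A)"
  unfolding blkA_def block_lower_def by auto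

lemma blkB_carrier: "blkB n m T B \<in> carrier_mat (n * T) (m * T)"
  and blkB_block_lower: "block_lower n m (blkB n m T B)"
  unfolding blkB_def block_lower_def by auto

lemma Zmat_blkA_strictly_block_lower: "strictly_block_lower n n (Zmat n T * blkA n T A)"
  by (rule strictly_block_lower_mult_block_lower[OF _ Zmat_strictly_block_lower blkA_block_lower])
    (simp add: Zmat_def blkA_def)

lemma Gmat_inverse:
  shows Gmat_carrier: "Gmat n T A \<in> carrier_mat (n * T) (n * T)"
    and "(1\<^sub>m (n * T) - Zmat n T * blkA n T A) * Gmat n T A = 1\<^sub>m (n * T)"
proof -
  have ZA: "Zmat n T * blkA n T A \<in> carrier_mat (n * T) (n * T)"
    using Zmat_carrier blkA_carrier by (rule mult_carrier_mat)
  then have "Determinant.det (1\<^sub>m (n * T) - Zmat n T * blkA n T A) = 1"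
    using Zmat_blkA_strictly_block_lower by (rule det_one_minus_strictly_block_lower)
  then show "Gmat n T A \<in> carrier_mat (n * T) (n * T)"
    and "(1\<^sub>m (n * T) - Zmat n T * blkA n T A) * Gmat n T A = 1\<^sub>m (n * T)"
    unfolding Gmat_def using inv_mat_correct[OF minus_carrier_mat[OF ZA]] by auto
qed

lemma Gmat_block_lower: "block_lower n n (Gmat n T A)"
  by (rule block_lower_inverse_one_minus[OF mult_carrier_mat[OF Zmat_carrier blkA_carrier]
        Zmat_blkA_strictly_block_lower Gmat_inverse])

lemma Fmat_carrier: "Fmat n m T A B \<in> carrier_mat (n * T) (m * T)"
  unfolding Fmat_def by (rule mult_carrier_mat[OF Gmat_carrier mult_carrier_mat[OF Zmat_carrier blkB_carrier]])

lemma Fmat_strictly_block_lower: "strictly_block_lower n m (Fmat n m T A B)"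
  unfolding Fmat_def
  by (rule block_lower_mult_strictly_block_lower[OF _ Gmat_block_lower
        strictly_block_lower_mult_block_lower[OF _ Zmat_strictly_block_lower blkB_block_lower]])
    (use Gmat_carrier[of n T A] in \<open>simp_all add: Zmat_def blkB_def\<close>)

lemma causal_gains_block_lower:
  assumes "K \<in> causal_gains n m T"
  shows "K \<in> carrier_mat (m * T) (n * T)" and "block_lower m n K"
  using assms unfolding causal_gains_def block_lower_def by auto

lemma closed_loop_inverse:
  assumes "K \<in> causal_gains n m T"
  shows "inv_mat (1\<^sub>m (n * T) - Fmat n m T A B * K) \<in> carrier_mat (n * T) (n * T)"
    and "(1\<^sub>m (n * T) - Fmat n m T A B * K) * inv_mat (1\<^sub>m (n * T) - Fmat n m T A B * K) = 1\<^sub>m (n * T)"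
proof -
  have FK: "Fmat n m T A B * K \<in> carrier_mat (n * T) (n * T)"
    using Fmat_carrier causal_gains_block_lower(1)[OF assms] by (rule mult_carrier_mat)
  have "strictly_block_lower n n (Fmat n m T A B * K)"
    by (rule strictly_block_lower_mult_block_lower[OF _ Fmat_strictly_block_lower
          causal_gains_block_lower(2)[OF assms]])
      (use Fmat_carrier[of n m T A B] causal_gains_block_lower(1)[OF assms] in simp)
  then have "Determinant.det (1\<^sub>m (n * T) - Fmat n m T A B * K) = 1"
    using FK by (intro det_one_minus_strictly_block_lower)
  then show "inv_mat (1\<^sub>m (n * T) - Fmat n m T A B * K) \<in> carrier_mat (n * T) (n * T)"
    and "(1\<^sub>m (n * T) - Fmat n m T A B * K) * inv_mat (1\<^sub>m (n * T) - Fmat n m T A B * K) = 1\<^sub>m (n * T)"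
    using inv_mat_correct[OF minus_carrier_mat[OF FK]] by auto
qed

lemma cl_x_closed_loop:
  assumes K: "K \<in> causal_gains n m T" and v: "v \<in> carrier_vec (n * T)"
  shows "cl_x n m T A B K v = Fmat n m T A B *\<^sub>v cl_u n m T A B K v + Gmat n T A *\<^sub>v v"
proof -
  define F where "F = Fmat n m T A B"
  define X where "X = inv_mat (1\<^sub>m (n * T) - F * K)"
  define x where "x = cl_x n m T A B K v"
  have Kc: "K \<in> carrier_mat (m * T) (n * T)" and Fc: "F \<in> carrier_mat (n * T) (m * T)"
    using causal_gains_block_lower(1)[OF K] Fmat_carrier[of n m T A B] unfolding F_def by auto
  have Gv: "Gmat n T A *\<^sub>v v \<in> carrier_vec (n * T)"
    using Gmat_carrier[of n T A] v by auto
  have x_eq: "x = X *\<^sub>v (Gmat n T A *\<^sub>v v)" and Xc: "X \<in> carrier_mat (n * T) (n * T)"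
    using closed_loop_inverse(1)[OF K] unfolding x_def X_def F_def cl_x_def by auto
  have xc: "x \<in> carrier_vec (n * T)"
    using Xc Gv unfolding x_eq by auto
  have "x - F *\<^sub>v (K *\<^sub>v x) = (1\<^sub>m (n * T) - F * K) *\<^sub>v x"
    using Fc Kc xc by (simp add: minus_mult_distrib_mat_vec[of _ "n * T" "n * T"])
  also have "\<dots> = ((1\<^sub>m (n * T) - F * K) * X) *\<^sub>v (Gmat n T A *\<^sub>v v)"
    unfolding x_eq using Fc Kc
    by (intro assoc_mult_mat_vec[symmetric, OF _ Xc Gv]) auto
  also have "\<dots> = Gmat n T A *\<^sub>v v"
    using closed_loop_inverse(2)[OF K] Gv unfolding X_def F_def by simp
  finally have closed_loop: "x - F *\<^sub>v (K *\<^sub>v x) = Gmat n T A *\<^sub>v v" .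
  have "x = F *\<^sub>v (K *\<^sub>v x) + (x - F *\<^sub>v (K *\<^sub>v x))"
    using Fc Kc xc by (auto simp del: index_mult_mat_vec)
  also have "\<dots> = F *\<^sub>v (K *\<^sub>v x) + Gmat n T A *\<^sub>v v"
    unfolding closed_loop ..
  finally show ?thesis
    unfolding x_def F_def cl_u_def .
qed

lemma clairvoyant_inverse:
  fixes A B :: "nat \<Rightarrow> real mat"
  assumes "psd_mat (n * T) Q" and "pd_mat (m * T) R"
  defines "H \<equiv> R + transpose_mat (Fmat n m T A B) * Q * Fmat n m T A B"
  shows "inv_mat H \<in> carrier_mat (m * T) (m * T)" and "H * inv_mat H = 1\<^sub>m (m * T)"
proof -
  have "H \<in> carrier_mat (m * T) (m * T)"
    using assms Fmat_carrier[of n m T A B] unfolding H_def psd_mat_def pd_mat_def by auto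
  moreover have "Determinant.det H \<noteq> 0"
    unfolding H_def using assms(2,1) Fmat_carrier by (rule pd_mat_plus_congruence_det_nonzero)
  ultimately show "inv_mat H \<in> carrier_mat (m * T) (m * T)" and "H * inv_mat H = 1\<^sub>m (m * T)"
    by (simp_all add: inv_mat_correct)
qed

lemma clairvoyant_gain_carrier:
  assumes "psd_mat (n * T) Q" and "pd_mat (m * T) R"
  shows "inv_mat (R + transpose_mat (Fmat n m T A B) * Q * Fmat n m T A B) * transpose_mat (Fmat n m T A B)
           * Q * Gmat n T A \<in> carrier_mat (m * T) (n * T)"
proof -
  have "transpose_mat (Fmat n m T A B) \<in> carrier_mat (m * T) (n * T)" and "Q \<in> carrier_mat (n * T) (n * T)"
    using Fmat_carrier[of n m T A B] assms(1) unfolding psd_mat_def by auto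
  then show ?thesis
    using clairvoyant_inverse(1)[OF assms] Gmat_carrier[of n T A] by (metis mult_carrier_mat)
qed

lemma opt_stationary:
  assumes Q: "psd_mat (n * T) Q" and R: "pd_mat (m * T) R" and v: "v \<in> carrier_vec (n * T)"
  shows "transpose_mat (Fmat n m T A B) *\<^sub>v (Q *\<^sub>v opt_x n m T A B Q R v)
           + R *\<^sub>v opt_u n m T A B Q R v = 0\<^sub>v (m * T)"
proof -
  define F where "F = Fmat n m T A B"
  define Hi where "Hi = inv_mat (R + transpose_mat F * Q * F)"
  have Qc: "Q \<in> carrier_mat (n * T) (n * T)" and Rc: "R \<in> carrier_mat (m * T) (m * T)"
    using Q R unfolding psd_mat_def pd_mat_def by auto
  have Fc: "F \<in> carrier_mat (n * T) (m * T)" and Ft: "transpose_mat F \<in> carrier_mat (m * T) (n * T)"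
    using Fmat_carrier unfolding F_def by auto
  have Hi: "Hi \<in> carrier_mat (m * T) (m * T)" "(R + transpose_mat F * Q * F) * Hi = 1\<^sub>m (m * T)"
    using clairvoyant_inverse[OF Q R] unfolding Hi_def F_def by auto
  have Gv: "Gmat n T A *\<^sub>v v \<in> carrier_vec (n * T)"
    using Gmat_carrier[of n T A] v by auto
  have "opt_u n m T A B Q R v = - ((Hi * transpose_mat F * Q * Gmat n T A) *\<^sub>v v)"
    unfolding opt_u_def Let_def Hi_def F_def ..
  also have "(Hi * transpose_mat F * Q * Gmat n T A) *\<^sub>v v = (Hi * transpose_mat F * Q) *\<^sub>v (Gmat n T A *\<^sub>v v)"
    using Hi(1) Ft Qc by (intro assoc_mult_mat_vec[OF _ Gmat_carrier v]) auto
  also have "\<dots> = (Hi * transpose_mat F) *\<^sub>v (Q *\<^sub>v (Gmat n T A *\<^sub>v v))"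
    using Hi(1) Ft by (intro assoc_mult_mat_vec[OF _ Qc Gv]) auto
  also have "\<dots> = Hi *\<^sub>v (transpose_mat F *\<^sub>v (Q *\<^sub>v (Gmat n T A *\<^sub>v v)))"
    using Qc Gv by (intro assoc_mult_mat_vec[OF Hi(1) Ft]) auto
  finally show ?thesis
    using normal_equation_solution_stationary[OF Qc Rc Fc Hi Gv] unfolding opt_x_def F_def by simp
qed

lemma closed_loop_cost_split:
  assumes Q: "psd_mat (n * T) Q" and R: "pd_mat (m * T) R"
    and K: "K \<in> causal_gains n m T" and v: "v \<in> carrier_vec (n * T)"
  shows "quad Q (cl_x n m T A B K v) + quad R (cl_u n m T A B K v)
    = quad Q (cl_x n m T A B K v - opt_x n m T A B Q R v) + quad R (cl_u n m T A B K v - opt_u n m T A B Q R v)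
      + (quad Q (opt_x n m T A B Q R v) + quad R (opt_u n m T A B Q R v))"
proof -
  have Qc: "Q \<in> carrier_mat (n * T) (n * T)" "transpose_mat Q = Q"
    and Rc: "R \<in> carrier_mat (m * T) (m * T)" "transpose_mat R = R"
    using Q R unfolding psd_mat_def pd_mat_def by auto
  have Gv: "Gmat n T A *\<^sub>v v \<in> carrier_vec (n * T)"
    using Gmat_carrier[of n T A] v by auto
  have u: "cl_u n m T A B K v \<in> carrier_vec (m * T)"
    using closed_loop_inverse(1)[OF K, of A B] causal_gains_block_lower(1)[OF K] Gv
    unfolding cl_u_def cl_x_def by auto
  have us: "opt_u n m T A B Q R v \<in> carrier_vec (m * T)"
    using clairvoyant_gain_carrier[OF Q R, of A B] v unfolding opt_u_def Let_def by auto
  have "transpose_mat (Fmat n m T A B) *\<^sub>v (Q *\<^sub>v (Fmat n m T A B *\<^sub>v opt_u n m T A B Q R v + Gmat n T A *\<^sub>v v))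
      + R *\<^sub>v opt_u n m T A B Q R v = 0\<^sub>v (m * T)"
    using opt_stationary[OF Q R v] unfolding opt_x_def .
  from quad_split_at_stationary_point[OF Qc Rc Fmat_carrier Gv u us this]
  show ?thesis
    unfolding cl_x_closed_loop[OF K v] opt_x_def .
qed

lemma square_integrable_vec_closed_loop:
  assumes K: "K \<in> causal_gains n m T" and w: "square_integrable_vec M (n * T) w"
  shows "square_integrable_vec M (n * T) (\<lambda>\<omega>. cl_x n m T A B K (w \<omega>))"
    and "square_integrable_vec M (m * T) (\<lambda>\<omega>. cl_u n m T A B K (w \<omega>))"
proof -
  show x: "square_integrable_vec M (n * T) (\<lambda>\<omega>. cl_x n m T A B K (w \<omega>))"
    unfolding cl_x_def
    by (rule square_integrable_vec_mult_mat_vec[OF closed_loop_inverse(1)[OF K]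
          square_integrable_vec_mult_mat_vec[OF Gmat_carrier w]])
  show "square_integrable_vec M (m * T) (\<lambda>\<omega>. cl_u n m T A B K (w \<omega>))"
    unfolding cl_u_def by (rule square_integrable_vec_mult_mat_vec[OF causal_gains_block_lower(1)[OF K] x])
qed

lemma square_integrable_vec_clairvoyant:
  assumes Q: "psd_mat (n * T) Q" and R: "pd_mat (m * T) R" and w: "square_integrable_vec M (n * T) w"
  shows "square_integrable_vec M (m * T) (\<lambda>\<omega>. opt_u n m T A B Q R (w \<omega>))"
    and "square_integrable_vec M (n * T) (\<lambda>\<omega>. opt_x n m T A B Q R (w \<omega>))"
proof -
  show u: "square_integrable_vec M (m * T) (\<lambda>\<omega>. opt_u n m T A B Q R (w \<omega>))"
    unfolding opt_u_def Let_def
    by (rule square_integrable_vec_uminus[OF square_integrable_vec_mult_mat_vec[OF clairvoyant_gain_carrier[OF Q R] w]])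
  show "square_integrable_vec M (n * T) (\<lambda>\<omega>. opt_x n m T A B Q R (w \<omega>))"
    unfolding opt_x_def
    by (rule square_integrable_vec_add[OF square_integrable_vec_mult_mat_vec[OF Fmat_carrier u]
          square_integrable_vec_mult_mat_vec[OF Gmat_carrier w]])
qed

lemma exp_dev_eq_exp_cost_minus_clairvoyant_cost:
  assumes Q: "psd_mat (n * T) Q" and R: "pd_mat (m * T) R"
    and K: "K \<in> causal_gains n m T" and w: "square_integrable_vec M (n * T) w"
  shows "exp_dev M w n m T A B Q R K = exp_cost M w n m T A B Q R K
    - (\<integral>\<omega>. quad Q (opt_x n m T A B Q R (w \<omega>)) + quad R (opt_u n m T A B Q R (w \<omega>)) \<partial>M)"
proof -
  have Qc: "Q \<in> carrier_mat (n * T) (n * T)" and Rc: "R \<in> carrier_mat (m * T) (m * T)"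
    using Q R unfolding psd_mat_def pd_mat_def by auto
  have "exp_dev M w n m T A B Q R K =
      (\<integral>\<omega>. (quad Q (cl_x n m T A B K (w \<omega>)) + quad R (cl_u n m T A B K (w \<omega>)))
        - (quad Q (opt_x n m T A B Q R (w \<omega>)) + quad R (opt_u n m T A B Q R (w \<omega>))) \<partial>M)"
    unfolding exp_dev_def
  proof (rule Bochner_Integration.integral_cong[OF refl])
    fix \<omega> assume "\<omega> \<in> space M"
    then have "w \<omega> \<in> carrier_vec (n * T)"
      using w unfolding square_integrable_vec_def by blast
    then show "quad Q (cl_x n m T A B K (w \<omega>) - opt_x n m T A B Q R (w \<omega>))
        + quad R (cl_u n m T A B K (w \<omega>) - opt_u n m T A B Q R (w \<omega>))
      = quad Q (cl_x n m T A B K (w \<omega>)) + quad R (cl_u n m T A B K (w \<omega>))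
        - (quad Q (opt_x n m T A B Q R (w \<omega>)) + quad R (opt_u n m T A B Q R (w \<omega>)))"
      by (subst closed_loop_cost_split[OF Q R K]) simp_all
  qed
  also have "\<dots> = exp_cost M w n m T A B Q R K
      - (\<integral>\<omega>. quad Q (opt_x n m T A B Q R (w \<omega>)) + quad R (opt_u n m T A B Q R (w \<omega>)) \<partial>M)"
    unfolding exp_cost_def
    using integrable_quad[OF Qc square_integrable_vec_closed_loop(1)[OF K w]]
      integrable_quad[OF Rc square_integrable_vec_closed_loop(2)[OF K w]]
      integrable_quad[OF Qc square_integrable_vec_clairvoyant(2)[OF Q R w]]
      integrable_quad[OF Rc square_integrable_vec_clairvoyant(1)[OF Q R w]]
    by (intro Bochner_Integration.integral_diff Bochner_Integration.integrable_add)
  finally show ?thesis .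
qed

lemma argmin_on_diff_const:
  assumes "\<And>k. k \<in> S \<Longrightarrow> f k = g k - c"
  shows "argmin_on S f = argmin_on S g"
  using assms unfolding argmin_on_def by auto

theorem corollary4:
  fixes M :: "'a measure" and w :: "'a \<Rightarrow> real vec"
    and n m T :: nat and A B :: "nat \<Rightarrow> real mat" and Q R :: "real mat"
  assumes "T \<ge> 1"
    and "\<forall>t. t + 1 < T \<longrightarrow> A t \<in> carrier_mat n n \<and> B t \<in> carrier_mat n m"
    and "psd_mat (n*T) Q" and "pd_mat (m*T) R"
    and "prob_space M"
    and "\<forall>\<omega> \<in> space M. w \<omega> \<in> carrier_vec (n*T)"
    and "\<forall>i < n*T. (\<lambda>\<omega>. w \<omega> $ i) \<in> borel_measurable M"
    and "\<forall>i < n*T. integrable M (\<lambda>\<omega>. (w \<omega> $ i)^2)"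
  shows "argmin_on (causal_gains n m T) (exp_dev M w n m T A B Q R)
         = argmin_on (causal_gains n m T) (exp_cost M w n m T A B Q R)"
proof -
  have "square_integrable_vec M (n * T) w"
    using assms(6-8) unfolding square_integrable_vec_def square_integrable_def by blast
  then show ?thesis
    using exp_dev_eq_exp_cost_minus_clairvoyant_cost[OF assms(3,4)] by (intro argmin_on_diff_const)
qed

end
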